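(* Let $q$ be a prime power and $n \ge 1$. Let $a : M_n(\mathbb{F}_q) \to \mathbb{R}$ be a factorization function. Then there is a function $\varphi : M_n(\mathbb{F}_q) \to \mathbb{R}$ of von Mangoldt type such that $\varphi(f) = a(f)$ for all squarefree $f \in M_n(\mathbb{F}_q)$.
   Context: $M_n(\mathbb{F}_q)$ is the set of monic degree-$n$ polynomials in $\mathbb{F}_q[x]$. A factorization function is a function $a : M_n(\mathbb{F}_q) \to \mathbb{R}$ such that whenever $f = P_1^{e_1}\cdots P_k^{e_k}$ with $P_i$ distinct monic irreducible polynomials, $a(f)$ depends only on the data $(\deg P_1, e_1; \dots; \deg P_k, e_k)$. For $(z_1,\dots,z_n) \in \overline{\mathbb{F}}_q^{\,n}$ and $\sigma \in S_n$, $\delta_\sigma(z_1,\dots,z_n) = 1$ if $\mathrm{Frob}_q(z_1,\dots,z_n) = \sigma(z_1,\dots,z_n)$ (Frobenius $z\mapsto z^q$ applied coordinatewise equals the permutation $\sigma$ of coordinates) and $0$ otherwise. A function $\varphi$ is of von Mangoldt type if there are real coefficients $(c_\sigma)_{\sigma \in S_n}$ with $\varphi(f) = \sum_{(z_1,\dots,z_n) \in \overline{\mathbb{F}}_q^{\,n},\, f = \prod_i (x - z_i)} \sum_{\sigma \in S_n} c_\sigma \delta_\sigma(z_1,\dots,z_n)$ for all $f$. *)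

theory Defs
  imports "HOL-Algebra.Algebraic_Closure_Type" "HOL-Library.FuncSet"
    "HOL-Combinatorics.Permutations"
begin

definition monic_polys :: "nat \<Rightarrow> ('k::field) poly set" where
  "monic_polys n = {f. lead_coeff f = 1 \<and> degree f = n}"

definition fact_data :: "('k::field_gcd) poly \<Rightarrow> (nat \<times> nat) multiset" where
  "fact_data f = image_mset (\<lambda>P. (degree P, multiplicity P f)) (mset_set (prime_factors f))"

definition factorization_function :: "nat \<Rightarrow> (('k::field_gcd) poly \<Rightarrow> real) \<Rightarrow> bool" where
  "factorization_function n a \<longleftrightarrow>
     (\<forall>f\<in>monic_polys n. \<forall>g\<in>monic_polys n. fact_data f = fact_data g \<longrightarrow> a f = a g)"

definition root_tuples :: "nat \<Rightarrow> ('k::field) poly \<Rightarrow> (nat \<Rightarrow> 'k alg_closure) set" where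
  "root_tuples n f = {z \<in> {..<n} \<rightarrow>\<^sub>E UNIV. map_poly to_ac f = (\<Prod>i<n. [:- z i, 1:])}"

definition frob_delta :: "nat \<Rightarrow> nat \<Rightarrow> (nat \<Rightarrow> nat) \<Rightarrow> (nat \<Rightarrow> 'K::field) \<Rightarrow> real" where
  "frob_delta q n \<sigma> z = (if \<forall>i<n. z i ^ q = z (\<sigma> i) then 1 else 0)"

definition von_mangoldt_type :: "nat \<Rightarrow> (('k::{finite,field_gcd}) poly \<Rightarrow> real) \<Rightarrow> bool" where
  "von_mangoldt_type n \<phi> \<longleftrightarrow>
     (\<exists>c :: (nat \<Rightarrow> nat) \<Rightarrow> real. \<forall>f\<in>monic_polys n.
        \<phi> f = (\<Sum>z\<in>root_tuples n f. \<Sum>\<sigma>\<in>{\<sigma>. \<sigma> permutes {..<n}}.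
                   c \<sigma> * frob_delta (card (UNIV :: 'k set)) n \<sigma> z))"

end

theory Submission
  imports Defs "Berlekamp_Zassenhaus.Finite_Field" "HOL-Algebra.Sylow"
    "HOL-Algebra.Multiplicative_Group"
begin

(* A squarefree monic f of degree n has n distinct roots in the algebraic closure, so its root
   tuples are the n! orderings of these roots, and for each root tuple z exactly one permutation
   \<sigma> satisfies z i ^ q = z (\<sigma> i). The roots of an irreducible factor of degree d form a single
   orbit of length d under the Frobenius z \<mapsto> z ^ q, so the cycle type of \<sigma> determines the
   factorization data of f, and hence a(f). Choosing c \<sigma> = a(f\<^sub>\<sigma>)/n! for any squarefree f\<^sub>\<sigma>
   admitting \<sigma> therefore gives \<phi>(f) = n! \<cdot> a(f)/n! = a(f) on squarefree f.
   That the Frobenius is a field homomorphism rests on q being a power of the characteristic p,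
   which holds because the additive group of the field has exponent p. *)

interpretation to_ac: field_hom "to_ac :: 'k::field \<Rightarrow> 'k alg_closure"
  by unfold_locales simp_all

interpretation to_ac_poly: map_poly_inj_idom_divide_hom "to_ac :: 'k::field \<Rightarrow> 'k alg_closure" ..

section \<open>Finite fields\<close>

lemma (in group) order_is_prime_power_if_exponent_prime:
  fixes p :: nat
  assumes fin: "finite (carrier G)" and p: "prime p"
    and exponent: "\<And>x. x \<in> carrier G \<Longrightarrow> x [^] p = \<one>"
  shows "\<exists>m. Coset.order G = p ^ m"
proof (rule ccontr)
  assume "\<nexists>m. Coset.order G = p ^ m"
  moreover have "Coset.order G \<noteq> 0" using fin by (simp add: order_gt_0_iff_finite)
  ultimately obtain r where r: "prime r" "r dvd Coset.order G" "r \<noteq> p"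
    using Ex_other_prime_factor[of "Coset.order G" p] p by auto
  then obtain H where H: "subgroup H G" "card H = r"
    using sylow_thm[of r G 1 "Coset.order G div r"] fin by (auto simp: is_group)
  interpret H: group "G\<lparr>carrier := H\<rparr>" by (rule subgroup_imp_group[OF H(1)])
  have "\<not> H \<subseteq> {\<one>}"
    using H(2) prime_gt_1_nat[OF r(1)] card_mono[of "{\<one>}" H] by auto
  then obtain x where x: "x \<in> H" "x \<noteq> \<one>" by blast
  have "H.ord x dvd r"
    using H.ord_dvd_group_order[of x] x H(2) by (simp add: Coset.order_def)
  moreover have "H.ord x \<noteq> 1"
    using H.pow_eq_id[of x 1] x subgroup.mem_carrier[OF H(1)] by simp
  ultimately have "H.ord x = r" using r(1) by (auto simp: prime_nat_iff)
  moreover have "H.ord x dvd p"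
    using H.pow_eq_id[of x p] exponent[of x] x subgroup.mem_carrier[OF H(1)]
    by (simp flip: nat_pow_consistent)
  ultimately show False using r p primes_dvd_imp_eq by blast
qed

lemma prime_CHAR_finite_field: "prime CHAR('k::{finite,field})"
  by (rule prime_CHAR_semidom) (simp add: finite_imp_CHAR_pos)

lemma card_finite_field_eq_CHAR_power: "\<exists>m. CARD('k::{finite,field}) = CHAR('k) ^ m"
proof -
  define G :: "'k monoid" where "G = \<lparr>carrier = UNIV, monoid.mult = (+), one = 0\<rparr>"
  interpret group G
  proof (rule groupI)
    fix x assume "x \<in> carrier G"
    show "\<exists>y\<in>carrier G. y \<otimes>\<^bsub>G\<^esub> x = \<one>\<^bsub>G\<^esub>"
      by (intro bexI[of _ "- x"]) (auto simp: G_def)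
  qed (auto simp: G_def add_ac)
  have pow: "x [^]\<^bsub>G\<^esub> k = of_nat k * x" for x :: 'k and k :: nat
    by (induction k) (simp_all add: G_def distrib_right)
  have "\<exists>m. Coset.order G = CHAR('k) ^ m"
  proof (rule order_is_prime_power_if_exponent_prime)
    show "x [^]\<^bsub>G\<^esub> CHAR('k) = \<one>\<^bsub>G\<^esub>" for x
      by (simp add: pow) (simp add: G_def)
  qed (simp_all add: G_def prime_CHAR_finite_field)
  then show ?thesis by (simp add: Coset.order_def G_def)
qed

lemma power_card_finite_field: "(x::'k::{finite,field}) ^ CARD('k) = x"
proof (cases "x = 0")
  case False
  \<comment> \<open>multiplication by x permutes the nonzero elements\<close>
  have "x * (\<Prod>y\<in>UNIV-{0}. x * y) = x * x ^ (CARD('k) - 1) * \<Prod>(UNIV-{0})"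
    by (simp add: prod.distrib mult_ac)
  also have "x * x ^ (CARD('k) - 1) = x ^ CARD('k)"
    by (simp flip: power_Suc add: Suc_diff_1)
  also have "(\<Prod>y\<in>UNIV-{0}. x * y) = (\<Prod>y\<in>UNIV-{0}. y)"
    by (rule prod.reindex_bij_witness[of _ "\<lambda>y. y / x" "\<lambda>y. x * y"]) (use False in auto)
  finally show ?thesis by simp
qed simp

lemma card_finite_field_ge_2: "CARD('k::{finite,field}) \<ge> 2"
  using card_mono[of UNIV "{0::'k, 1}"] by simp

section \<open>The Frobenius map on the algebraic closure\<close>

lemma field_hom_power_card: "field_hom (\<lambda>x::'k::{finite,field} alg_closure. x ^ CARD('k))"
proof -
  obtain m where "CARD('k) = CHAR('k alg_closure) ^ m"
    using card_finite_field_eq_CHAR_power[where 'k='k] by auto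
  then have "(x + y) ^ CARD('k) = x ^ CARD('k) + y ^ CARD('k)" for x y :: "'k alg_closure"
    using prime_CHAR_finite_field[where 'k='k] by (intro freshmans_dream') simp_all
  then show ?thesis by unfold_locales (simp_all add: power_mult_distrib)
qed

lemma power_card_inj_alg_closure:
  "(x::'k::{finite,field} alg_closure) ^ CARD('k) = y ^ CARD('k) \<Longrightarrow> x = y"
proof -
  interpret frob: field_hom "\<lambda>x::'k alg_closure. x ^ CARD('k)" by (rule field_hom_power_card)
  show "x ^ CARD('k) = y ^ CARD('k) \<Longrightarrow> x = y" by simp
qed

lemma map_poly_power_card_map_to_ac:
  "map_poly (\<lambda>x. x ^ CARD('k)) (map_poly to_ac P) = map_poly to_ac (P :: 'k::{finite,field} poly)"
  by (rule poly_eqI) (simp add: coeff_map_poly power_card_finite_field flip: to_ac_power)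

lemma poly_map_to_ac_power_card:
  fixes P :: "'k::{finite,field} poly" and z :: "'k alg_closure"
  shows "poly (map_poly to_ac P) (z ^ CARD('k)) = poly (map_poly to_ac P) z ^ CARD('k)"
proof -
  interpret frob: field_hom "\<lambda>x::'k alg_closure. x ^ CARD('k)" by (rule field_hom_power_card)
  show ?thesis
    using frob.poly_map_poly[of "map_poly to_ac P" z] by (simp only: map_poly_power_card_map_to_ac)
qed

lemma poly_map_to_ac_power_card_power:
  fixes P :: "'k::{finite,field} poly" and z :: "'k alg_closure"
  shows "poly (map_poly to_ac P) (z ^ (CARD('k) ^ k)) = poly (map_poly to_ac P) z ^ (CARD('k) ^ k)"
proof (induction k)
  case (Suc k)
  have "poly (map_poly to_ac P) (z ^ (CARD('k) ^ Suc k))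
      = poly (map_poly to_ac P) ((z ^ (CARD('k) ^ k)) ^ CARD('k))"
    by (simp only: power_Suc2 power_mult)
  also have "\<dots> = poly (map_poly to_ac P) z ^ (CARD('k) ^ Suc k)"
    by (simp only: poly_map_to_ac_power_card Suc.IH power_Suc2 power_mult)
  finally show ?case .
qed simp

lemma power_card_power_inj_alg_closure:
  "(x::'k::{finite,field} alg_closure) ^ (CARD('k) ^ k) = y ^ (CARD('k) ^ k) \<Longrightarrow> x = y"
proof (induction k arbitrary: x y)
  case (Suc k)
  then show ?case
    by (metis power_card_inj_alg_closure power_Suc2 power_mult)
qed simp

lemma power_card_eq_self_iff_in_range_to_ac:
  "(w::'k::{finite,field} alg_closure) ^ CARD('k) = w \<longleftrightarrow> w \<in> range to_ac"
proof
  assume fixed: "w ^ CARD('k) = w"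
  define Q :: "'k alg_closure poly" where "Q = monom 1 CARD('k) - [:0, 1:]"
  have q2: "CARD('k) \<ge> 2" by (rule card_finite_field_ge_2)
  have "coeff Q CARD('k) = 1" using q2 by (simp add: Q_def coeff_pCons split: nat.split)
  then have Q0: "Q \<noteq> 0" by auto
  have degQ: "degree Q \<le> CARD('k)"
    unfolding Q_def using q2 by (intro degree_diff_le) (simp_all add: degree_monom_eq)
  have rootQ: "poly Q x = 0 \<longleftrightarrow> x ^ CARD('k) = x" for x
    by (simp add: Q_def poly_monom)
  define R where "R = {x. poly Q x = 0}"
  have "finite R" unfolding R_def using poly_roots_finite[OF Q0] .
  moreover have "range to_ac \<subseteq> R"
    by (auto simp: R_def rootQ power_card_finite_field simp flip: to_ac_power)
  moreover have "card R \<le> card (range (to_ac :: 'k \<Rightarrow> _))"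
    using card_poly_roots_bound[OF Q0] degQ by (simp add: R_def card_image inj_to_ac)
  ultimately have "range to_ac = R" by (intro card_subset_eq) (auto dest: card_mono)
  then show "w \<in> range to_ac" using fixed by (auto simp: R_def rootQ)
qed (auto simp: power_card_finite_field simp flip: to_ac_power)

lemma power_card_fixed_poly_in_range:
  fixes g :: "'k::{finite,field} alg_closure poly"
  assumes "map_poly (\<lambda>x. x ^ CARD('k)) g = g"
  shows "map_poly to_ac (map_poly of_ac g) = g"
proof (rule poly_eqI)
  fix i
  have "coeff g i ^ CARD('k) = coeff g i"
    using arg_cong[OF assms, of "\<lambda>p. coeff p i"] by (simp add: coeff_map_poly)
  then show "coeff (map_poly to_ac (map_poly of_ac g)) i = coeff g i"
    by (simp add: coeff_map_poly to_ac_of_ac power_card_eq_self_iff_in_range_to_ac)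
qed

section \<open>Roots of irreducible and squarefree polynomials\<close>

lemma prod_distinct_linear_factors_dvd:
  fixes w :: "'b \<Rightarrow> 'a::idom"
  assumes "finite A" "inj_on w A" "\<And>a. a \<in> A \<Longrightarrow> poly p (w a) = 0"
  shows "(\<Prod>a\<in>A. [:- w a, 1:]) dvd p"
  using assms
proof (induction A arbitrary: p rule: finite_induct)
  case (insert b A)
  then have "(\<Prod>a\<in>A. [:- w a, 1:]) dvd p" by (simp add: inj_on_insert)
  then obtain r where r: "p = (\<Prod>a\<in>A. [:- w a, 1:]) * r" by (elim dvdE)
  have "poly (\<Prod>a\<in>A. [:- w a, 1:]) (w b) \<noteq> 0"
    using insert.prems(1) insert.hyps by (auto simp: poly_prod inj_on_insert prod_zero_iff)
  then have "poly r (w b) = 0" using insert.prems(2)[of b] r by simp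
  then obtain s where "r = [:- w b, 1:] * s" by (auto simp: poly_eq_0_iff_dvd elim: dvdE)
  then have "p = (\<Prod>a\<in>insert b A. [:- w a, 1:]) * s"
    using r insert.hyps by (simp only: prod.insert[OF insert.hyps] mult_ac)
  then show ?case by (rule dvdI)
qed simp

definition frob_period :: "'k::{finite,field} alg_closure \<Rightarrow> nat" where
  "frob_period z = (LEAST k. k > 0 \<and> z ^ (CARD('k) ^ k) = z)"

lemma power_card_power_cancel:
  fixes z :: "'k::{finite,field} alg_closure"
  assumes "i \<le> j" "z ^ (CARD('k) ^ i) = z ^ (CARD('k) ^ j)"
  shows "z ^ (CARD('k) ^ (j - i)) = z"
proof -
  have "z ^ (CARD('k) ^ j) = (z ^ (CARD('k) ^ (j - i))) ^ (CARD('k) ^ i)"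
    using assms(1) by (simp flip: power_mult power_add)
  then show ?thesis
    using assms(2) power_card_power_inj_alg_closure by metis
qed

lemma periodic_root_map_to_ac:
  fixes P :: "'k::{finite,field} poly" and z :: "'k alg_closure"
  assumes "P \<noteq> 0" "poly (map_poly to_ac P) z = 0"
  shows "\<exists>k>0. z ^ (CARD('k) ^ k) = z"
proof -
  have "range (\<lambda>k. z ^ (CARD('k) ^ k)) \<subseteq> {x. poly (map_poly to_ac P) x = 0}"
    using assms(2) by (auto simp: poly_map_to_ac_power_card_power)
  then have "finite (range (\<lambda>k. z ^ (CARD('k) ^ k)))"
    using assms(1) poly_roots_finite[of "map_poly to_ac P"] finite_subset by auto
  then obtain i j where "i < j" "z ^ (CARD('k) ^ i) = z ^ (CARD('k) ^ j)"
    using infinite_UNIV_nat finite_imageD linorder_inj_onI'[of UNIV] by metis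
  then show ?thesis
    using power_card_power_cancel[of i j z] by (intro exI[of _ "j - i"]) auto
qed

lemma frob_period_root:
  fixes P :: "'k::{finite,field} poly" and z :: "'k alg_closure"
  assumes "P \<noteq> 0" "poly (map_poly to_ac P) z = 0"
  shows "frob_period z > 0" and "z ^ (CARD('k) ^ frob_period z) = z"
  using LeastI_ex[OF periodic_root_map_to_ac[OF assms]] by (simp_all add: frob_period_def)

lemma power_card_power_neq_below_frob_period:
  "0 < k \<Longrightarrow> k < frob_period z \<Longrightarrow> z ^ (CARD('k) ^ k) \<noteq> (z::'k::{finite,field} alg_closure)"
  unfolding frob_period_def by (auto dest: not_less_Least)

lemma inj_on_frobenius_orbit:
  fixes z :: "'k::{finite,field} alg_closure"
  shows "inj_on (\<lambda>j. z ^ (CARD('k) ^ j)) {..<frob_period z}"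
proof (rule linorder_inj_onI')
  fix i j assume "i \<in> {..<frob_period z}" "j \<in> {..<frob_period z}" "i < j"
  then show "z ^ (CARD('k) ^ i) \<noteq> z ^ (CARD('k) ^ j)"
    using power_card_power_cancel[of i j z] power_card_power_neq_below_frob_period[of "j - i" z]
    by auto
qed

lemma frobenius_orbit_poly_fixed:
  fixes z :: "'k::{finite,field} alg_closure"
  assumes "z ^ (CARD('k) ^ m) = z"
  shows "map_poly (\<lambda>x. x ^ CARD('k)) (\<Prod>j<m. [:- (z ^ (CARD('k) ^ j)), 1:])
           = (\<Prod>j<m. [:- (z ^ (CARD('k) ^ j)), 1:])"
proof -
  interpret frob: field_hom "\<lambda>x::'k alg_closure. x ^ CARD('k)" by (rule field_hom_power_card)
  interpret frob_poly: map_poly_comm_ring_hom "\<lambda>x::'k alg_closure. x ^ CARD('k)" ..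
  define f where "f j = [:- (z ^ (CARD('k) ^ j)), 1:]" for j
  have "map_poly (\<lambda>x. x ^ CARD('k)) (\<Prod>j<m. f j) = (\<Prod>j<m. f (Suc j))"
    by (simp add: f_def frob_poly.hom_prod frob.map_poly_pCons_hom frob.hom_uminus
        flip: power_mult power_Suc2)
  also have "\<dots> = (\<Prod>j<m. f j)"
  proof (cases m)
    case (Suc m')
    have "f m = f 0" using assms by (simp add: f_def)
    then show ?thesis
      using prod.lessThan_Suc[of "\<lambda>j. f (Suc j)" m'] prod.lessThan_Suc_shift[of f m']
      by (simp add: Suc mult.commute)
  qed simp
  finally show ?thesis by (simp only: f_def)
qed

lemma map_to_ac_irreducible_eq_frobenius_orbit:
  fixes P :: "'k::{finite,field} poly" and z :: "'k alg_closure"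
  assumes irr: "irreducible P" and monic: "lead_coeff P = 1"
    and root: "poly (map_poly to_ac P) z = 0"
  shows "degree P = frob_period z"
    and "map_poly to_ac P = (\<Prod>j<degree P. [:- (z ^ (CARD('k) ^ j)), 1:])"
proof -
  \<comment> \<open>the Frobenius orbit of z yields a monic factor of P over 'k; irreducibility forces equality\<close>
  have P0: "P \<noteq> 0" using monic by auto
  define m where "m = frob_period z"
  define g where "g = (\<Prod>j<m. [:- (z ^ (CARD('k) ^ j)), 1:])"
  define g0 where "g0 = map_poly of_ac g"
  have g0: "map_poly to_ac g0 = g"
    unfolding g0_def g_def m_def
    by (intro power_card_fixed_poly_in_range frobenius_orbit_poly_fixed frob_period_root[OF P0 root])
  have "g dvd map_poly to_ac P"
    unfolding g_def m_def using root card_finite_field_ge_2[where 'k='k]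
    by (intro prod_distinct_linear_factors_dvd)
      (simp_all add: inj_on_frobenius_orbit poly_map_to_ac_power_card_power)
  then have "g0 dvd P" unfolding g0[symmetric] by (rule to_ac.dvd_map_poly_hom_imp_dvd)
  then obtain h where h: "P = g0 * h" by (elim dvdE)
  have "degree g0 = m"
    using to_ac.degree_map_poly_hom[of g0] by (simp add: g0 g_def degree_prod_sum_eq)
  moreover have "lead_coeff g0 = 1"
    using to_ac.hom_lead_coeff[of g0] by (simp add: g0 g_def lead_coeff_prod)
  moreover have "m > 0" unfolding m_def using frob_period_root[OF P0 root] by simp
  ultimately have "\<not> is_unit g0" by (auto simp: is_unit_iff_degree)
  then have "is_unit h" using irreducibleD[OF irr h] by blast
  then obtain c where "h = [:c:]" by (rule is_unit_polyE)
  then have "P = smult c g0" using h by simp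
  moreover from this have "c = 1" using monic \<open>lead_coeff g0 = 1\<close> by (cases "c = 0") simp_all
  ultimately have "P = g0" by simp
  then show "degree P = frob_period z"
    and "map_poly to_ac P = (\<Prod>j<degree P. [:- (z ^ (CARD('k) ^ j)), 1:])"
    using g0 \<open>degree g0 = m\<close> by (simp_all add: g_def m_def)
qed

lemma degree_pos_irreducible_poly: "irreducible (P :: 'a::field poly) \<Longrightarrow> degree P > 0"
  by (auto simp: is_unit_iff_degree irreducible_def)

lemma card_roots_map_to_ac_irreducible:
  fixes P :: "'k::{finite,field} poly"
  assumes "irreducible P" "lead_coeff P = 1"
  shows "card {x. poly (map_poly to_ac P) x = 0} = degree P"
proof -
  obtain z where root: "poly (map_poly to_ac P) z = 0"
    using alg_closed_imp_poly_has_root degree_pos_irreducible_poly[OF assms(1)] by force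
  note orbit = map_to_ac_irreducible_eq_frobenius_orbit[OF assms root]
  have "{x. poly (map_poly to_ac P) x = 0} = (\<lambda>j. z ^ (CARD('k) ^ j)) ` {..<degree P}"
    by (subst orbit(2)) (auto simp: poly_prod prod_zero_iff)
  then show ?thesis
    using inj_on_frobenius_orbit[of z] orbit(1) by (simp add: card_image)
qed

lemma lead_coeff_prime_poly:
  fixes P :: "'k::field_gcd poly"
  assumes "prime P"
  shows "lead_coeff P = 1"
proof -
  have P: "P \<noteq> 0" "normalize P = P" using assms by (auto simp: prime_def)
  then have "unit_factor P * P = 1 * P" using unit_factor_mult_normalize[of P] by simp
  then have "unit_factor P = 1" using P(1) mult_right_cancel by blast
  then show ?thesis by (simp add: unit_factor_poly_def one_pCons)
qed

lemma squarefree_monic_eq_prod_prime_factors: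
  fixes f :: "'k::field_gcd poly"
  assumes "lead_coeff f = 1" "squarefree f"
  shows "f = (\<Prod>P\<in>prime_factors f. P)"
proof -
  have f0: "f \<noteq> 0" using assms by auto
  have "(\<Prod>P\<in>prime_factors f. P ^ multiplicity P f) = f"
    using prod_prime_factors[OF f0] normalize_monic[OF assms(1)] by simp
  then show ?thesis using assms(2) f0 by (simp add: squarefree_factorial_semiring')
qed

lemma coprime_map_to_ac_no_common_root:
  fixes P Q :: "'k::field_gcd poly"
  assumes "coprime P Q" "poly (map_poly to_ac P) x = 0"
  shows "poly (map_poly to_ac Q) x \<noteq> 0"
proof
  assume "poly (map_poly to_ac Q) x = 0"
  obtain u v where "u * P + v * Q = 1"
    using assms(1) bezout_coefficients_fst_snd[of P Q] by (metis coprime_iff_gcd_eq_1)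
  then have "poly (map_poly to_ac (u * P + v * Q)) x = 1" by simp
  moreover have "poly (map_poly to_ac (u * P + v * Q)) x = 0"
    using assms(2) \<open>poly (map_poly to_ac Q) x = 0\<close> by (simp add: hom_distribs)
  ultimately show False by simp
qed

lemma roots_map_to_ac_squarefree:
  fixes f :: "'k::field_gcd poly"
  assumes "lead_coeff f = 1" "squarefree f"
  shows "{x. poly (map_poly to_ac f) x = 0}
           = (\<Union>P\<in>prime_factors f. {x. poly (map_poly to_ac P) x = 0})"
proof -
  have "map_poly to_ac f = (\<Prod>P\<in>prime_factors f. map_poly to_ac P)"
    by (subst squarefree_monic_eq_prod_prime_factors[OF assms]) (rule to_ac_poly.hom_prod)
  then show ?thesis by (auto simp: poly_prod prod_zero_iff)
qed

lemma card_Union_roots_map_to_ac_primes: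
  fixes A :: "'k::{finite,field_gcd} poly set"
  assumes "finite A" "\<And>P. P \<in> A \<Longrightarrow> prime P"
  shows "card (\<Union>P\<in>A. {x. poly (map_poly to_ac P) x = 0}) = (\<Sum>P\<in>A. degree P)"
proof -
  have "finite {x. poly (map_poly to_ac P) x = 0}" if "P \<in> A" for P
    using assms(2)[OF that] by (intro poly_roots_finite) auto
  moreover have "{x. poly (map_poly to_ac P) x = 0} \<inter> {x. poly (map_poly to_ac Q) x = 0} = {}"
    if "P \<in> A" "Q \<in> A" "P \<noteq> Q" for P Q
    using that assms(2) coprime_map_to_ac_no_common_root[of P Q] primes_coprime[of P Q] by auto
  ultimately have "card (\<Union>P\<in>A. {x. poly (map_poly to_ac P) x = 0})
                   = (\<Sum>P\<in>A. card {x. poly (map_poly to_ac P) x = 0})"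
    using assms(1) by (intro card_UN_disjoint) auto
  also have "\<dots> = (\<Sum>P\<in>A. degree P)"
    using assms(2) by (intro sum.cong refl card_roots_map_to_ac_irreducible)
      (simp_all add: prime_def prime_elem_imp_irreducible lead_coeff_prime_poly)
  finally show ?thesis .
qed

lemma card_roots_map_to_ac_squarefree:
  fixes f :: "'k::{finite,field_gcd} poly"
  assumes "lead_coeff f = 1" "squarefree f"
  shows "card {x. poly (map_poly to_ac f) x = 0} = degree f"
proof -
  have "degree (\<Prod>P\<in>prime_factors f. P) = (\<Sum>P\<in>prime_factors f. degree P)"
    by (rule degree_prod_sum_eq) auto
  then show ?thesis
    using roots_map_to_ac_squarefree[OF assms] squarefree_monic_eq_prod_prime_factors[OF assms]
      card_Union_roots_map_to_ac_primes[of "prime_factors f"]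
    by (simp add: in_prime_factors_imp_prime)
qed

lemma card_roots_frob_period_squarefree:
  fixes f :: "'k::{finite,field_gcd} poly"
  assumes "lead_coeff f = 1" "squarefree f"
  shows "card {x. poly (map_poly to_ac f) x = 0 \<and> frob_period x = d}
           = d * card {P \<in> prime_factors f. degree P = d}"
proof -
  have "frob_period x = degree P"
    if "P \<in> prime_factors f" "poly (map_poly to_ac P) x = 0" for P x
  proof -
    have "prime P" using that(1) by (rule in_prime_factors_imp_prime)
    then show ?thesis
      using that(2) map_to_ac_irreducible_eq_frobenius_orbit(1)[of P x]
      by (simp add: prime_def prime_elem_imp_irreducible lead_coeff_prime_poly)
  qed
  moreover have "poly (map_poly to_ac f) x = 0 \<longleftrightarrow>
                   (\<exists>P\<in>prime_factors f. poly (map_poly to_ac P) x = 0)" for x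
    using roots_map_to_ac_squarefree[OF assms] by blast
  ultimately have "{x. poly (map_poly to_ac f) x = 0 \<and> frob_period x = d}
      = (\<Union>P\<in>{P \<in> prime_factors f. degree P = d}. {x. poly (map_poly to_ac P) x = 0})"
    by (auto 4 3)
  also have "card \<dots> = (\<Sum>P\<in>{P \<in> prime_factors f. degree P = d}. degree P)"
    by (rule card_Union_roots_map_to_ac_primes) (auto intro: in_prime_factors_imp_prime)
  finally show ?thesis by (simp add: mult.commute)
qed

lemma count_fact_data_squarefree:
  fixes f :: "'k::field_gcd poly"
  assumes "squarefree f"
  shows "count (fact_data f) (d, e) = (if e = 1 then card {P \<in> prime_factors f. degree P = d} else 0)"
proof -
  have "multiplicity P f = 1" if "P \<in> prime_factors f" for P
    using assms that by (metis squarefree_factorial_semiring' not_squarefree_0)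
  then have "{P \<in> prime_factors f. (degree P, multiplicity P f) = (d, e)}
      = (if e = 1 then {P \<in> prime_factors f. degree P = d} else {})"
    by auto
  then show ?thesis by (simp add: fact_data_def count_image_mset_eq_card_vimage)
qed

section \<open>Root tuples and their Frobenius permutations\<close>

lemma roots_map_to_ac_root_tuple:
  "z \<in> root_tuples n f \<Longrightarrow> {x. poly (map_poly to_ac f) x = 0} = z ` {..<n}"
  by (auto simp: root_tuples_def poly_prod prod_zero_iff)

lemma degree_root_tuple: "z \<in> root_tuples n f \<Longrightarrow> degree f = n"
  using to_ac.degree_map_poly_hom[of f] by (simp add: root_tuples_def degree_prod_sum_eq)

lemma root_tuples_nonempty:
  fixes f :: "'k::field poly"
  assumes "lead_coeff f = 1" "degree f = n"
  shows "\<exists>z. z \<in> root_tuples n f"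
proof -
  have "map_poly to_ac f \<noteq> 0" using assms(1) by auto
  then obtain A where A: "size A = n" "map_poly to_ac f = (\<Prod>x\<in>#A. [:- x, 1:])"
    using alg_closed_imp_factorization[of "map_poly to_ac f"] assms by auto
  obtain xs where xs: "mset xs = A" using ex_mset by blast
  define z where "z i = (if i < n then xs ! i else undefined)" for i
  have "length xs = n" using A(1) xs by auto
  have "(\<Prod>i<n. [:- z i, 1:]) = (\<Prod>i\<leftarrow>[0..<n]. [:- xs ! i, 1:])"
    by (simp add: z_def atLeast0LessThan flip: prod.distinct_set_conv_list)
  also have "\<dots> = (\<Prod>x\<leftarrow>xs. [:- x, 1:])"
    using \<open>length xs = n\<close> by (intro arg_cong[where f = prod_list] nth_equalityI) simp_all
  also have "\<dots> = map_poly to_ac f" using A(2) xs by (simp flip: prod_mset_prod_list)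
  moreover have "z \<in> {..<n} \<rightarrow>\<^sub>E UNIV" by (simp add: z_def PiE_def extensional_def)
  ultimately show ?thesis unfolding root_tuples_def by auto
qed

lemma inj_on_root_tuple:
  fixes f :: "'k::{finite,field_gcd} poly"
  assumes "lead_coeff f = 1" "squarefree f" "z \<in> root_tuples n f"
  shows "inj_on z {..<n}"
  using card_roots_map_to_ac_squarefree[OF assms(1,2)] roots_map_to_ac_root_tuple[OF assms(3)]
    degree_root_tuple[OF assms(3)]
  by (intro eq_card_imp_inj_on) simp_all

lemma root_tuples_squarefree:
  fixes f :: "'k::{finite,field_gcd} poly"
  assumes "f \<in> monic_polys n" "squarefree f"
  defines "R \<equiv> {x. poly (map_poly to_ac f) x = 0}"
  shows "root_tuples n f = {z \<in> {..<n} \<rightarrow>\<^sub>E R. inj_on z {..<n}}"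
proof (intro equalityI subsetI)
  have monic: "lead_coeff f = 1" and deg: "degree f = n"
    using assms(1) by (auto simp: monic_polys_def)
  fix z
  show "z \<in> {z \<in> {..<n} \<rightarrow>\<^sub>E R. inj_on z {..<n}}" if "z \<in> root_tuples n f"
    using that inj_on_root_tuple[OF monic assms(2) that] roots_map_to_ac_root_tuple[OF that]
    by (auto simp: R_def root_tuples_def)
  assume z: "z \<in> {z \<in> {..<n} \<rightarrow>\<^sub>E R. inj_on z {..<n}}"
  obtain z0 where z0: "z0 \<in> root_tuples n f" using root_tuples_nonempty[OF monic deg] ..
  have "finite R" unfolding R_def using monic by (intro poly_roots_finite) auto
  moreover have "card R = n"
    using card_roots_map_to_ac_squarefree[OF monic assms(2)] deg by (simp add: R_def)
  ultimately have "z ` {..<n} = R" using z by (intro card_subset_eq) (auto simp: card_image)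
  then have "bij_betw z {..<n} R" "bij_betw z0 {..<n} R"
    using z inj_on_root_tuple[OF monic assms(2) z0] roots_map_to_ac_root_tuple[OF z0]
    by (auto simp: bij_betw_def R_def)
  then have "(\<Prod>i<n. [:- z i, 1:]) = (\<Prod>i<n. [:- z0 i, 1:])"
    using prod.reindex_bij_betw[where h = z and g = "\<lambda>x. [:- x, 1:]"]
      prod.reindex_bij_betw[where h = z0 and g = "\<lambda>x. [:- x, 1:]"] by simp
  then show "z \<in> root_tuples n f" using z z0 by (auto simp: root_tuples_def PiE_def)
qed

lemma card_root_tuples_squarefree:
  fixes f :: "'k::{finite,field_gcd} poly"
  assumes "f \<in> monic_polys n" "squarefree f"
  shows "card (root_tuples n f) = fact n"
proof -
  let ?R = "{x. poly (map_poly to_ac f) x = 0}"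
  have "finite ?R" using assms(1) by (intro poly_roots_finite) (auto simp: monic_polys_def)
  moreover have "card ?R = n"
    using assms card_roots_map_to_ac_squarefree[of f] by (auto simp: monic_polys_def)
  ultimately show ?thesis
    by (simp add: root_tuples_squarefree[OF assms] card_inj_on_subset_funcset fact_prod_rev)
qed

lemma permutes_exists_comp_eq:
  assumes "finite A" "inj_on z A" "inj_on w A" "w ` A \<subseteq> z ` A"
  shows "\<exists>\<sigma>. \<sigma> permutes A \<and> (\<forall>i\<in>A. z (\<sigma> i) = w i)"
proof -
  define \<sigma> where "\<sigma> i = (if i \<in> A then inv_into A z (w i) else i)" for i
  have \<sigma>: "\<sigma> i \<in> A" "z (\<sigma> i) = w i" if "i \<in> A" for i
    using that assms(4) by (auto simp: \<sigma>_def inv_into_into f_inv_into_f)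
  have "inj_on \<sigma> A"
    using \<sigma> assms(3) by (metis inj_on_def)
  moreover have "\<sigma> ` A = A" using \<sigma>(1) \<open>inj_on \<sigma> A\<close> by (intro endo_inj_surj[OF assms(1)]) auto
  ultimately have "bij_betw \<sigma> A A" by (simp add: bij_betw_def)
  then have "\<sigma> permutes A" by (rule bij_imp_permutes) (simp add: \<sigma>_def)
  then show ?thesis using \<sigma>(2) by blast
qed

lemma permutes_eq_if_comp_eq:
  assumes "\<sigma> permutes A" "\<tau> permutes A" "inj_on z A" "\<forall>i\<in>A. z (\<sigma> i) = z (\<tau> i)"
  shows "\<sigma> = \<tau>"
proof
  fix i show "\<sigma> i = \<tau> i"
    using assms permutes_in_image[OF assms(1)] permutes_in_image[OF assms(2)]
    by (cases "i \<in> A") (auto simp: permutes_not_in inj_on_def)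
qed

lemma ex1_frobenius_permutation:
  fixes f :: "'k::{finite,field_gcd} poly"
  assumes "lead_coeff f = 1" "squarefree f" "z \<in> root_tuples n f"
  shows "\<exists>!\<sigma>. \<sigma> permutes {..<n} \<and> (\<forall>i<n. z i ^ CARD('k) = z (\<sigma> i))"
proof -
  have inj: "inj_on z {..<n}" by (rule inj_on_root_tuple[OF assms])
  then have "inj_on (\<lambda>i. z i ^ CARD('k)) {..<n}"
    by (auto simp: inj_on_def dest: power_card_inj_alg_closure)
  moreover have "(\<lambda>i. z i ^ CARD('k)) ` {..<n} \<subseteq> z ` {..<n}"
  proof clarify
    fix i assume "i < n"
    have root: "poly (map_poly to_ac f) x = 0 \<longleftrightarrow> x \<in> z ` {..<n}" for x
      using roots_map_to_ac_root_tuple[OF assms(3)] by blast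
    have "0 < CARD('k)" using card_finite_field_ge_2[where 'k='k] by simp
    then show "z i ^ CARD('k) \<in> z ` {..<n}"
      using root[of "z i"] root[of "z i ^ CARD('k)"] \<open>i < n\<close> by (simp add: poly_map_to_ac_power_card)
  qed
  ultimately obtain \<sigma> where "\<sigma> permutes {..<n}" "\<forall>i<n. z i ^ CARD('k) = z (\<sigma> i)"
    using permutes_exists_comp_eq[OF _ inj] by fastforce
  moreover have "\<tau> = \<sigma>" if "\<tau> permutes {..<n}" "\<forall>i<n. z i ^ CARD('k) = z (\<tau> i)" for \<tau>
    using that calculation inj by (intro permutes_eq_if_comp_eq[of \<tau> "{..<n}" \<sigma> z]) auto
  ultimately show ?thesis by blast
qed

definition cycle_length :: "('a \<Rightarrow> 'a) \<Rightarrow> 'a \<Rightarrow> nat" where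
  "cycle_length \<sigma> i = (LEAST k. k > 0 \<and> (\<sigma> ^^ k) i = i)"

lemma cycle_length_eq_frob_period:
  fixes z :: "'a \<Rightarrow> 'k::{finite,field} alg_closure"
  assumes "inj_on z A" "\<sigma> permutes A" "\<forall>i\<in>A. z i ^ CARD('k) = z (\<sigma> i)" "i \<in> A"
  shows "cycle_length \<sigma> i = frob_period (z i)"
proof -
  have iter: "(\<sigma> ^^ k) i \<in> A \<and> z ((\<sigma> ^^ k) i) = z i ^ (CARD('k) ^ k)" for k
  proof (induction k)
    case (Suc k)
    have "(\<sigma> ^^ k) i \<in> A" using Suc by simp
    then have "z ((\<sigma> ^^ Suc k) i) = z ((\<sigma> ^^ k) i) ^ CARD('k)" using assms(3) by simp
    also have "\<dots> = z i ^ (CARD('k) ^ Suc k)" using Suc by (simp only: power_Suc2 power_mult)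
    finally show ?case using Suc permutes_in_image[OF assms(2)] by simp
  qed (simp add: assms(4))
  then have "(\<sigma> ^^ k) i = i \<longleftrightarrow> z i ^ (CARD('k) ^ k) = z i" for k
    using assms(1,4) by (metis inj_on_def)
  then show ?thesis by (simp add: cycle_length_def frob_period_def)
qed

lemma count_fact_data_cycle_length:
  fixes f :: "'k::{finite,field_gcd} poly"
  assumes "lead_coeff f = 1" "squarefree f" "z \<in> root_tuples n f"
    and "\<sigma> permutes {..<n}" "\<forall>i<n. z i ^ CARD('k) = z (\<sigma> i)"
  shows "count (fact_data f) (d, e)
           = (if e = 1 \<and> d > 0 then card {i \<in> {..<n}. cycle_length \<sigma> i = d} div d else 0)"
proof -
  have inj: "inj_on z {..<n}" by (rule inj_on_root_tuple[OF assms(1-3)])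
  have "{i \<in> {..<n}. cycle_length \<sigma> i = d} = {i \<in> {..<n}. frob_period (z i) = d}"
    using cycle_length_eq_frob_period[OF inj assms(4)] assms(5) by auto
  moreover have "z ` {i \<in> {..<n}. frob_period (z i) = d}
                 = {x. poly (map_poly to_ac f) x = 0 \<and> frob_period x = d}"
    using roots_map_to_ac_root_tuple[OF assms(3)] by auto
  ultimately have "card {i \<in> {..<n}. cycle_length \<sigma> i = d}
                   = d * card {P \<in> prime_factors f. degree P = d}"
    using card_image[OF inj_on_subset[OF inj]] card_roots_frob_period_squarefree[OF assms(1,2)]
    by (metis (no_types, lifting) mem_Collect_eq subsetI)
  moreover have "degree P > 0" if "P \<in> prime_factors f" for P
    using in_prime_factors_imp_prime[OF that]
    by (intro degree_pos_irreducible_poly prime_elem_imp_irreducible prime_imp_prime_elem)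
  then have "{P \<in> prime_factors f. degree P = 0} = {}" by auto
  ultimately show ?thesis by (simp add: count_fact_data_squarefree[OF assms(2)])
qed

lemma fact_data_eq_if_same_frobenius_permutation:
  fixes f g :: "'k::{finite,field_gcd} poly"
  assumes "lead_coeff f = 1" "squarefree f" "z \<in> root_tuples n f"
    and "lead_coeff g = 1" "squarefree g" "w \<in> root_tuples n g"
    and "\<sigma> permutes {..<n}" "\<forall>i<n. z i ^ CARD('k) = z (\<sigma> i)" "\<forall>i<n. w i ^ CARD('k) = w (\<sigma> i)"
  shows "fact_data f = fact_data g"
proof (rule multiset_eqI)
  fix x :: "nat \<times> nat"
  show "count (fact_data f) x = count (fact_data g) x"
    by (cases x) (simp add: count_fact_data_cycle_length[OF assms(1-3,7,8)]
        count_fact_data_cycle_length[OF assms(4-6,7,9)])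
qed

lemma sum_frob_delta_root_tuple:
  fixes f :: "'k::{finite,field_gcd} poly"
  assumes "lead_coeff f = 1" "squarefree f" "z \<in> root_tuples n f"
    and "\<sigma> permutes {..<n}" "\<forall>i<n. z i ^ CARD('k) = z (\<sigma> i)"
  shows "(\<Sum>\<tau>\<in>{\<tau>. \<tau> permutes {..<n}}. c \<tau> * frob_delta CARD('k) n \<tau> z) = c \<sigma>"
proof -
  have "frob_delta CARD('k) n \<tau> z = (if \<tau> = \<sigma> then 1 else 0)" if "\<tau> permutes {..<n}" for \<tau>
    using ex1_frobenius_permutation[OF assms(1-3)] that assms(4,5) by (auto simp: frob_delta_def)
  then have "(\<Sum>\<tau>\<in>{\<tau>. \<tau> permutes {..<n}}. c \<tau> * frob_delta CARD('k) n \<tau> z)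
      = (\<Sum>\<tau>\<in>{\<tau>. \<tau> permutes {..<n}}. if \<tau> = \<sigma> then c \<sigma> else 0)"
    by (intro sum.cong) auto
  then show ?thesis using assms(4) by (simp add: finite_permutations)
qed

text \<open>If no squarefree polynomial admits \<sigma>, \<open>SOME\<close> picks an arbitrary polynomial; this is
  harmless, as such a \<sigma> never contributes to the sums over root tuples of squarefree polynomials.\<close>

definition frobenius_witness :: "nat \<Rightarrow> (nat \<Rightarrow> nat) \<Rightarrow> 'k::{finite,field_gcd} poly" where
  "frobenius_witness n \<sigma> = (SOME f. f \<in> monic_polys n \<and> squarefree f \<and>
     (\<exists>z\<in>root_tuples n f. \<forall>i<n. z i ^ CARD('k) = z (\<sigma> i)))"

lemma factorization_function_frobenius_witness:
  fixes f :: "'k::{finite,field_gcd} poly"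
  assumes "factorization_function n a" "f \<in> monic_polys n" "squarefree f" "z \<in> root_tuples n f"
    and "\<sigma> permutes {..<n}" "\<forall>i<n. z i ^ CARD('k) = z (\<sigma> i)"
  shows "a (frobenius_witness n \<sigma>) = a f"
proof -
  let ?g = "frobenius_witness n \<sigma> :: 'k poly"
  have "?g \<in> monic_polys n \<and> squarefree ?g \<and>
        (\<exists>w\<in>root_tuples n ?g. \<forall>i<n. w i ^ CARD('k) = w (\<sigma> i))"
    unfolding frobenius_witness_def by (rule someI[of _ f]) (use assms in blast)
  then obtain w where w: "?g \<in> monic_polys n" "squarefree ?g" "w \<in> root_tuples n ?g"
    "\<forall>i<n. w i ^ CARD('k) = w (\<sigma> i)"
    by blast
  have "fact_data ?g = fact_data f"
    using w assms
    by (intro fact_data_eq_if_same_frobenius_permutation[where z = w and w = z and \<sigma> = \<sigma>])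
      (auto simp: monic_polys_def)
  then show ?thesis using assms(1,2) w(1) unfolding factorization_function_def by blast
qed

theorem proposition4p6:
  fixes a :: "('k::{finite,field_gcd}) poly \<Rightarrow> real" and n :: nat
  assumes "n \<ge> 1" and "factorization_function n a"
  shows "\<exists>\<phi>. von_mangoldt_type n \<phi> \<and>
           (\<forall>f\<in>monic_polys n. squarefree f \<longrightarrow> \<phi> f = a f)"
proof -
  define c where "c \<sigma> = a (frobenius_witness n \<sigma>) / fact n" for \<sigma>
  define \<phi> where "\<phi> f = (\<Sum>z\<in>root_tuples n f. \<Sum>\<sigma>\<in>{\<sigma>. \<sigma> permutes {..<n}}.
                            c \<sigma> * frob_delta (card (UNIV :: 'k set)) n \<sigma> z)" for f :: "'k poly"
  have "\<phi> f = a f" if f: "f \<in> monic_polys n" "squarefree f" for f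
  proof -
    have monic: "lead_coeff f = 1" using f(1) by (auto simp: monic_polys_def)
    have "(\<Sum>\<sigma>\<in>{\<sigma>. \<sigma> permutes {..<n}}. c \<sigma> * frob_delta CARD('k) n \<sigma> z) = a f / fact n"
      if z: "z \<in> root_tuples n f" for z
    proof -
      obtain \<sigma> where \<sigma>: "\<sigma> permutes {..<n}" "\<forall>i<n. z i ^ CARD('k) = z (\<sigma> i)"
        using ex1_frobenius_permutation[OF monic f(2) z] by blast
      then show ?thesis
        using sum_frob_delta_root_tuple[OF monic f(2) z \<sigma>, of c]
          factorization_function_frobenius_witness[OF assms(2) f z \<sigma>]
        by (simp add: c_def)
    qed
    then show ?thesis using card_root_tuples_squarefree[OF f] by (simp add: \<phi>_def)
  qed
  moreover have "von_mangoldt_type n \<phi>"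
    unfolding von_mangoldt_type_def \<phi>_def by (intro exI[of _ c]) simp
  ultimately show ?thesis by blast
qed

end
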